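(* Let $V=\{1,\dots,n\}$, $\mathcal{H}=\bigotimes_{v\in V}\mathcal{H}^v$, $k\ge1$, and let $\{h_X\}_{X\in E_k}$, $\{f_X\}_{X\in E_k}$ be Hermitian operators with $h_X,f_X$ supported on $X$. For real parameter vectors $\vec a=(a_X)_{X\in E_k}$, $\vec b=(b_X)_{X\in E_k}$ set $H_{\vec a}=\sum_X a_Xh_X$, $\mathcal{F}_{\vec b}=\sum_X b_Xf_X$, $\rho_{\vec a}=e^{-\beta H_{\vec a}}/\mathrm{tr}(e^{-\beta H_{\vec a}})$, with $\beta,\tau\in\mathbb{R}$ fixed. Then for all $w_1\in\mathcal{C}_{m_1}$, $w_2\in\mathcal{C}_{m_2}$ such that $w_1\oplus w_2\notin\mathcal{G}_{m_1+m_2}$, $$\mathcal{D}_{w_2}\tilde{\mathcal{D}}_{w_1}\log\big[\mathrm{tr}(e^{-\tau\mathcal{F}_{\vec b}}\rho_{\vec a})\big]\Big|_{\vec a=\vec 0,\vec b=\vec 0}=0.$$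
   Context: $E_k=\{X\subseteq V:|X|\le k\}$. A cluster is a finite multiset $w=\{X_1,\dots,X_{|w|}\}$ of elements of $E_k$; $\mathcal{C}_m$ is the set of clusters with $|w|=m$; $\oplus$ is multiset union; $V_w=X_1\cup\dots\cup X_{|w|}$. A cluster $w$ is connected if there is no decomposition $w=w_1\oplus w_2$ with $w_1,w_2$ nonempty and $V_{w_1}\cap V_{w_2}=\emptyset$; $\mathcal{G}_m$ is the set of connected clusters of size $m$. For a cluster $w$, $\mathcal{D}_w=\prod_{X\in w}\partial/\partial a_X$ and $\tilde{\mathcal{D}}_w=\prod_{X\in w}\partial/\partial b_X$ (products with multiplicity). "Supported on $X$" means acting as identity outside the factors in $X$. *)

theory Defs
  imports "HOL-Analysis.Analysis" "HOL-Library.Multiset" "HOL-Library.FuncSet"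
begin

text \<open>Finite-dimensional tensor product: site v in V carries C^(d v).
  Basis states of the full space are configurations s in PiE V ({..< d v}).
  Operators are matrices indexed by configurations.\<close>

type_synonym cfg = "nat \<Rightarrow> nat"
type_synonym op = "cfg \<Rightarrow> cfg \<Rightarrow> complex"

definition cfgs :: "nat set \<Rightarrow> (nat \<Rightarrow> nat) \<Rightarrow> cfg set" where
  "cfgs V d = PiE V (\<lambda>v. {..<d v})"

definition mone :: "op" where
  "mone = (\<lambda>s t. if s = t then 1 else 0)"

definition mmul :: "nat set \<Rightarrow> (nat \<Rightarrow> nat) \<Rightarrow> op \<Rightarrow> op \<Rightarrow> op" where
  "mmul V d A B = (\<lambda>s t. \<Sum>u\<in>cfgs V d. A s u * B u t)"

fun mpow :: "nat set \<Rightarrow> (nat \<Rightarrow> nat) \<Rightarrow> op \<Rightarrow> nat \<Rightarrow> op" where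
  "mpow V d A 0 = mone"
| "mpow V d A (Suc k) = mmul V d A (mpow V d A k)"

definition mexp :: "nat set \<Rightarrow> (nat \<Rightarrow> nat) \<Rightarrow> op \<Rightarrow> op" where
  "mexp V d A = (\<lambda>s t. \<Sum>k. mpow V d A k s t / of_nat (fact k))"

definition mtrace :: "nat set \<Rightarrow> (nat \<Rightarrow> nat) \<Rightarrow> op \<Rightarrow> complex" where
  "mtrace V d A = (\<Sum>s\<in>cfgs V d. A s s)"

definition hermitian :: "nat set \<Rightarrow> (nat \<Rightarrow> nat) \<Rightarrow> op \<Rightarrow> bool" where
  "hermitian V d A \<longleftrightarrow> (\<forall>s\<in>cfgs V d. \<forall>t\<in>cfgs V d. A t s = cnj (A s t))"

text \<open>A is supported on X: A = A_X \<otimes> identity on the factors outside X.\<close>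
definition supported_on :: "nat set \<Rightarrow> (nat \<Rightarrow> nat) \<Rightarrow> nat set \<Rightarrow> op \<Rightarrow> bool" where
  "supported_on V d X A \<longleftrightarrow> (\<exists>g. \<forall>s\<in>cfgs V d. \<forall>t\<in>cfgs V d.
      A s t = (if (\<forall>v\<in>V - X. s v = t v) then g (restrict s X) (restrict t X) else 0))"

definition Ek :: "nat set \<Rightarrow> nat \<Rightarrow> nat set set" where
  "Ek V k = {X. X \<subseteq> V \<and> card X \<le> k}"

definition clusters :: "nat set \<Rightarrow> nat \<Rightarrow> nat \<Rightarrow> nat set multiset set" where
  "clusters V k m = {w. set_mset w \<subseteq> Ek V k \<and> size w = m}"

definition Vw :: "nat set multiset \<Rightarrow> nat set" where
  "Vw w = \<Union> (set_mset w)"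

definition connected_cluster :: "nat set multiset \<Rightarrow> bool" where
  "connected_cluster w \<longleftrightarrow> \<not> (\<exists>w1 w2. w = w1 + w2 \<and> w1 \<noteq> {#} \<and> w2 \<noteq> {#} \<and> Vw w1 \<inter> Vw w2 = {})"

definition conn_clusters :: "nat set \<Rightarrow> nat \<Rightarrow> nat \<Rightarrow> nat set multiset set" where
  "conn_clusters V k m = {w \<in> clusters V k m. connected_cluster w}"

definition pda :: "nat set \<Rightarrow> ((nat set \<Rightarrow> real) \<Rightarrow> (nat set \<Rightarrow> real) \<Rightarrow> real)
    \<Rightarrow> (nat set \<Rightarrow> real) \<Rightarrow> (nat set \<Rightarrow> real) \<Rightarrow> real" where
  "pda X F = (\<lambda>a b. deriv (\<lambda>t. F (a(X := t)) b) (a X))"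

definition pdb :: "nat set \<Rightarrow> ((nat set \<Rightarrow> real) \<Rightarrow> (nat set \<Rightarrow> real) \<Rightarrow> real)
    \<Rightarrow> (nat set \<Rightarrow> real) \<Rightarrow> (nat set \<Rightarrow> real) \<Rightarrow> real" where
  "pdb X F = (\<lambda>a b. deriv (\<lambda>t. F a (b(X := t))) (b X))"

text \<open>D_w and tilde D_w for a cluster listed in some order (the function is smooth,
  so the order is irrelevant; the statement quantifies over all orderings).\<close>
definition Da where "Da ws F = foldr pda ws F"
definition Db where "Db ws F = foldr pdb ws F"

definition Hop :: "nat set \<Rightarrow> nat \<Rightarrow> (nat set \<Rightarrow> op) \<Rightarrow> (nat set \<Rightarrow> real) \<Rightarrow> op" where
  "Hop V k h a = (\<lambda>s t. \<Sum>X\<in>Ek V k. of_real (a X) * h X s t)"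

end

theory Submission
  imports Defs
begin

text \<open>If \<open>w\<^sub>1 \<oplus> w\<^sub>2\<close> is not connected, its sets fall into two families \<open>S\<^sub>1\<close> and \<open>S\<^sub>2\<close>
  living on complementary sets of sites \<open>W\<^sub>1\<close> and \<open>W\<^sub>2\<close> (the empty set may go to either
  side). As long as all parameters outside \<open>S\<^sub>1 \<union> S\<^sub>2\<close> vanish, both Hamiltonians have the
  form \<open>K\<^sub>1 \<otimes> 1 + 1 \<otimes> K\<^sub>2\<close>, so their exponentials and the expectation value
  \<open>tr (e\<^bsup>-\<tau>F\<^esup> \<rho>)\<close> factorise over \<open>W\<^sub>1\<close> and \<open>W\<^sub>2\<close>. Both factors are positive reals, so the
  logarithm splits into a function of the \<open>S\<^sub>1\<close>-parameters plus a function of the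
  \<open>S\<^sub>2\<close>-parameters, and a mixed derivative in parameters of both families annihilates it.
  If all sets of the cluster are empty, \<open>h\<^sub>{}\<close> and \<open>f\<^sub>{}\<close> are scalars; the logarithm is then
  linear in \<open>b\<^sub>{}\<close> and independent of \<open>a\<^sub>{}\<close>, while the derivative has order at least two.\<close>

section \<open>Matrix exponentials on configurations\<close>

lemma finite_cfgs: "finite V \<Longrightarrow> finite (cfgs V d)"
  unfolding cfgs_def by (intro finite_PiE) auto

lemma cfgs_nonempty: "\<forall>v\<in>W. d v > 0 \<Longrightarrow> cfgs W d \<noteq> {}"
  unfolding cfgs_def by (auto simp: PiE_eq_empty_iff)

lemma cfgs_empty: "cfgs {} d = {\<lambda>_. undefined}"
  unfolding cfgs_def by simp

lemma mmul_assoc: "mmul V d (mmul V d A B) C = mmul V d A (mmul V d B C)"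
  unfolding mmul_def
  by (auto intro!: ext simp: sum_distrib_left sum_distrib_right mult.assoc intro: sum.swap)

lemma mmul_mone_left: "finite V \<Longrightarrow> s \<in> cfgs V d \<Longrightarrow> mmul V d mone A s t = A s t"
  unfolding mmul_def mone_def by (simp add: finite_cfgs if_distrib[where f = "\<lambda>x. x * _"] cong: if_cong)

lemma mmul_mone_right: "finite V \<Longrightarrow> t \<in> cfgs V d \<Longrightarrow> mmul V d A mone s t = A s t"
  unfolding mmul_def mone_def by (simp add: finite_cfgs if_distrib[where f = "\<lambda>x. _ * x"] cong: if_cong)

lemma mmul_cong:
  "(\<And>u. u \<in> cfgs V d \<Longrightarrow> A s u = A' s u) \<Longrightarrow> (\<And>u. u \<in> cfgs V d \<Longrightarrow> B u t = B' u t)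
    \<Longrightarrow> mmul V d A B s t = mmul V d A' B' s t"
  unfolding mmul_def by (intro sum.cong) auto

lemma mmul_add_left: "mmul V d (\<lambda>s t. A s t + B s t) C s t = mmul V d A C s t + mmul V d B C s t"
  unfolding mmul_def by (simp add: distrib_right sum.distrib)

lemma mmul_scale_left: "mmul V d (\<lambda>s t. c * A s t) B s t = c * mmul V d A B s t"
  unfolding mmul_def by (simp add: sum_distrib_left mult.assoc)

lemma mmul_scale_right: "mmul V d A (\<lambda>s t. c * B s t) s t = c * mmul V d A B s t"
  unfolding mmul_def by (simp add: sum_distrib_left mult.left_commute)

lemma mmul_sum_right: "mmul V d C (\<lambda>s t. \<Sum>i\<in>I. B i s t) s t = (\<Sum>i\<in>I. mmul V d C (B i) s t)"
  unfolding mmul_def by (simp add: sum_distrib_left sum.swap[of _ I])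

lemma mpow_cong:
  assumes "\<And>s t. s \<in> cfgs V d \<Longrightarrow> t \<in> cfgs V d \<Longrightarrow> A s t = A' s t"
  shows "s \<in> cfgs V d \<Longrightarrow> t \<in> cfgs V d \<Longrightarrow> mpow V d A k s t = mpow V d A' k s t"
proof (induction k arbitrary: s t)
  case (Suc k)
  then show ?case by (simp, intro mmul_cong) (use assms in auto)
qed simp

lemma mpow_commute:
  assumes fin: "finite V"
    and comm: "\<And>s t. s \<in> cfgs V d \<Longrightarrow> t \<in> cfgs V d \<Longrightarrow> mmul V d B A s t = mmul V d A B s t"
  shows "s \<in> cfgs V d \<Longrightarrow> t \<in> cfgs V d \<Longrightarrow> mmul V d B (mpow V d A i) s t = mmul V d (mpow V d A i) B s t"
proof (induction i arbitrary: s t)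
  case 0
  then show ?case by (simp add: mmul_mone_left mmul_mone_right fin)
next
  case (Suc i)
  have "mmul V d B (mpow V d A (Suc i)) s t = mmul V d (mmul V d B A) (mpow V d A i) s t"
    by (simp add: mmul_assoc)
  also have "\<dots> = mmul V d (mmul V d A B) (mpow V d A i) s t"
    by (rule mmul_cong) (use Suc comm in auto)
  also have "\<dots> = mmul V d A (mmul V d B (mpow V d A i)) s t"
    by (simp add: mmul_assoc)
  also have "\<dots> = mmul V d A (mmul V d (mpow V d A i) B) s t"
    by (rule mmul_cong) (use Suc in auto)
  also have "\<dots> = mmul V d (mpow V d A (Suc i)) B s t"
    by (simp add: mmul_assoc)
  finally show ?case .
qed

lemma pascal_sum:
  fixes Y :: "nat \<Rightarrow> 'a::comm_semiring_1"
  shows "(\<Sum>i\<le>n. of_nat (n choose i) * (Y (Suc i) + Y i)) = (\<Sum>i\<le>Suc n. of_nat (Suc n choose i) * Y i)"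
proof -
  have "(\<Sum>i\<le>n. of_nat (n choose i) * Y i) = (\<Sum>i\<le>Suc n. of_nat (n choose i) * Y i)"
    by (simp add: binomial_eq_0)
  also have "\<dots> = Y 0 + (\<Sum>i\<le>n. of_nat (n choose Suc i) * Y (Suc i))"
    by (subst sum.atMost_Suc_shift) simp
  finally have low: "(\<Sum>i\<le>n. of_nat (n choose i) * Y i) = Y 0 + (\<Sum>i\<le>n. of_nat (n choose Suc i) * Y (Suc i))" .
  have "(\<Sum>i\<le>Suc n. of_nat (Suc n choose i) * Y i) = Y 0 + (\<Sum>i\<le>n. of_nat (Suc n choose Suc i) * Y (Suc i))"
    by (subst sum.atMost_Suc_shift) simp
  also have "\<dots> = Y 0 + (\<Sum>i\<le>n. of_nat (n choose i) * Y (Suc i)) + (\<Sum>i\<le>n. of_nat (n choose Suc i) * Y (Suc i))"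
    by (simp add: distrib_right sum.distrib add.assoc)
  finally show ?thesis using low by (simp add: distrib_left sum.distrib add_ac)
qed

lemma mpow_add_binomial:
  assumes fin: "finite V"
    and comm: "\<And>s t. s \<in> cfgs V d \<Longrightarrow> t \<in> cfgs V d \<Longrightarrow> mmul V d B A s t = mmul V d A B s t"
  shows "s \<in> cfgs V d \<Longrightarrow> t \<in> cfgs V d \<Longrightarrow> mpow V d (\<lambda>s t. A s t + B s t) n s t
     = (\<Sum>i\<le>n. of_nat (n choose i) * mmul V d (mpow V d A i) (mpow V d B (n - i)) s t)"
proof (induction n arbitrary: s t)
  case 0
  then show ?case by (simp add: mmul_mone_left fin)
next
  case (Suc n)
  define Y where "Y = (\<lambda>j. mmul V d (mpow V d A j) (mpow V d B (Suc n - j)) s t)"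
  let ?T = "\<lambda>i. mmul V d (mpow V d A i) (mpow V d B (n - i))"
  have "mpow V d (\<lambda>s t. A s t + B s t) (Suc n) s t
      = mmul V d (\<lambda>s t. A s t + B s t) (\<lambda>u t. \<Sum>i\<le>n. of_nat (n choose i) * ?T i u t) s t"
    by (simp, rule mmul_cong) (use Suc in auto)
  also have "\<dots> = (\<Sum>i\<le>n. of_nat (n choose i) * (mmul V d A (?T i) s t + mmul V d B (?T i) s t))"
    by (simp add: mmul_sum_right mmul_scale_right mmul_add_left)
  also have "\<dots> = (\<Sum>i\<le>n. of_nat (n choose i) * (Y (Suc i) + Y i))"
  proof (intro sum.cong refl arg_cong2[where f = "(*)"] arg_cong2[where f = "(+)"])
    fix i assume i: "i \<in> {..n}"
    show "mmul V d A (?T i) s t = Y (Suc i)"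
      by (simp add: Y_def flip: mmul_assoc)
    have "mmul V d B (?T i) s t = mmul V d (mmul V d (mpow V d A i) B) (mpow V d B (n - i)) s t"
      by (subst mmul_assoc[symmetric], rule mmul_cong) (use Suc mpow_commute[OF fin comm] in auto)
    also have "\<dots> = Y i" using i by (simp add: Y_def mmul_assoc Suc_diff_le)
    finally show "mmul V d B (?T i) s t = Y i" .
  qed
  also have "\<dots> = (\<Sum>i\<le>Suc n. of_nat (Suc n choose i) * Y i)" by (rule pascal_sum)
  finally show ?case by (simp add: Y_def)
qed

lemma norm_mpow_le:
  assumes fin: "finite V"
  shows "s \<in> cfgs V d \<Longrightarrow> t \<in> cfgs V d \<Longrightarrow>
    norm (mpow V d A k s t) \<le> (\<Sum>u\<in>cfgs V d. \<Sum>v\<in>cfgs V d. norm (A u v)) ^ k"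
proof (induction k arbitrary: s t)
  case 0 then show ?case by (simp add: mone_def)
next
  case (Suc k)
  let ?M = "\<Sum>u\<in>cfgs V d. \<Sum>v\<in>cfgs V d. norm (A u v)"
  have "norm (mpow V d A (Suc k) s t) \<le> (\<Sum>u\<in>cfgs V d. norm (A s u) * norm (mpow V d A k u t))"
    unfolding mpow.simps mmul_def by (rule order_trans[OF norm_sum]) (simp add: norm_mult)
  also have "\<dots> \<le> (\<Sum>u\<in>cfgs V d. norm (A s u)) * ?M ^ k"
    unfolding sum_distrib_right by (rule sum_mono, rule mult_left_mono) (use Suc in auto)
  also have "\<dots> \<le> ?M * ?M ^ k"
    by (rule mult_right_mono, rule member_le_sum[where f = "\<lambda>u. \<Sum>v\<in>cfgs V d. norm (A u v)"])
       (use Suc fin finite_cfgs in \<open>auto intro!: sum_nonneg zero_le_power\<close>)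
  finally show ?case by simp
qed

lemma summable_mexp_norm:
  assumes "finite V" "s \<in> cfgs V d" "t \<in> cfgs V d"
  shows "summable (\<lambda>k. norm (mpow V d A k s t / of_nat (fact k)))"
proof (rule summable_comparison_test[OF _ summable_exp])
  let ?M = "\<Sum>u\<in>cfgs V d. \<Sum>v\<in>cfgs V d. norm (A u v)"
  show "\<exists>N. \<forall>n\<ge>N. norm (norm (mpow V d A n s t / of_nat (fact n))) \<le> inverse (fact n) * ?M ^ n"
  proof (intro exI allI impI)
    fix n :: nat
    have "norm (mpow V d A n s t) \<le> ?M ^ n" by (rule norm_mpow_le[OF assms])
    then show "norm (norm (mpow V d A n s t / of_nat (fact n))) \<le> inverse (fact n) * ?M ^ n"
      by (simp add: norm_divide divide_simps)
  qed
qed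

lemma summable_mexp:
  "finite V \<Longrightarrow> s \<in> cfgs V d \<Longrightarrow> t \<in> cfgs V d \<Longrightarrow> summable (\<lambda>k. mpow V d A k s t / of_nat (fact k))"
  using summable_norm_cancel[OF summable_mexp_norm] .

lemma mexp_cong:
  "(\<And>s t. s \<in> cfgs V d \<Longrightarrow> t \<in> cfgs V d \<Longrightarrow> A s t = A' s t)
    \<Longrightarrow> s \<in> cfgs V d \<Longrightarrow> t \<in> cfgs V d \<Longrightarrow> mexp V d A s t = mexp V d A' s t"
  unfolding mexp_def by (simp add: mpow_cong[of V d A A'])

lemma mexp_zero: "mexp V d (\<lambda>s t. 0) s t = mone s t"
proof -
  have "(\<lambda>k. mpow V d (\<lambda>s t. 0) k s t / of_nat (fact k)) = (\<lambda>k. if k = 0 then mone s t else 0)"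
    by (rule ext, case_tac k) (auto simp: mmul_def)
  then show ?thesis
    unfolding mexp_def using sums_single[of 0 "\<lambda>_. mone s t"] by (simp add: sums_iff)
qed

lemma mexp_add:
  assumes fin: "finite V"
    and comm: "\<And>s t. s \<in> cfgs V d \<Longrightarrow> t \<in> cfgs V d \<Longrightarrow> mmul V d B A s t = mmul V d A B s t"
    and s: "s \<in> cfgs V d" and t: "t \<in> cfgs V d"
  shows "mexp V d (\<lambda>s t. A s t + B s t) s t = mmul V d (mexp V d A) (mexp V d B) s t"
proof -
  define a where "a = (\<lambda>u k. mpow V d A k s u / of_nat (fact k))"
  define b where "b = (\<lambda>u k. mpow V d B k u t / of_nat (fact k))"
  have sa: "summable (\<lambda>k. norm (a u k))" if "u \<in> cfgs V d" for u
    using summable_mexp_norm[OF fin s that] by (simp add: a_def)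
  have sb: "summable (\<lambda>k. norm (b u k))" if "u \<in> cfgs V d" for u
    using summable_mexp_norm[OF fin that t] by (simp add: b_def)
  have "mmul V d (mexp V d A) (mexp V d B) s t = (\<Sum>u\<in>cfgs V d. (\<Sum>k. a u k) * (\<Sum>k. b u k))"
    by (simp add: mmul_def mexp_def a_def b_def)
  also have "\<dots> = (\<Sum>u\<in>cfgs V d. \<Sum>n. \<Sum>i\<le>n. a u i * b u (n - i))"
    by (rule sum.cong[OF refl], rule Cauchy_product) (use sa sb in auto)
  also have "\<dots> = (\<Sum>n. \<Sum>u\<in>cfgs V d. \<Sum>i\<le>n. a u i * b u (n - i))"
    by (rule suminf_sum[symmetric], rule summable_Cauchy_product) (use sa sb in auto)
  also have "\<dots> = (\<Sum>n. mpow V d (\<lambda>s t. A s t + B s t) n s t / of_nat (fact n))"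
  proof (rule suminf_cong)
    fix n
    have "(\<Sum>u\<in>cfgs V d. \<Sum>i\<le>n. a u i * b u (n - i))
        = (\<Sum>i\<le>n. mmul V d (mpow V d A i) (mpow V d B (n - i)) s t / (fact i * fact (n - i)))"
      by (simp add: a_def b_def mmul_def sum_divide_distrib sum.swap[of _ "cfgs V d"])
    also have "\<dots> = (\<Sum>i\<le>n. of_nat (n choose i) * mmul V d (mpow V d A i) (mpow V d B (n - i)) s t / fact n)"
      by (intro sum.cong refl) (simp add: binomial_fact)
    also have "\<dots> = mpow V d (\<lambda>s t. A s t + B s t) n s t / fact n"
      by (simp add: mpow_add_binomial[OF fin comm s t] sum_divide_distrib)
    finally show "(\<Sum>u\<in>cfgs V d. \<Sum>i\<le>n. a u i * b u (n - i))
        = mpow V d (\<lambda>s t. A s t + B s t) n s t / of_nat (fact n)"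
      by simp
  qed
  finally show ?thesis by (simp add: mexp_def)
qed

lemma mexp_neg_mmul:
  assumes "finite V" "s \<in> cfgs V d" "t \<in> cfgs V d"
  shows "mmul V d (mexp V d (\<lambda>s t. - A s t)) (mexp V d A) s t = mone s t"
proof -
  have "mmul V d A (\<lambda>s t. - A s t) s t = mmul V d (\<lambda>s t. - A s t) A s t" for s t
    using mmul_scale_left[of V d "-1" A A s t] mmul_scale_right[of V d A "-1" A s t] by simp
  from mexp_add[OF assms(1) this assms(2,3)] show ?thesis by (simp add: mexp_zero)
qed

definition adj :: "op \<Rightarrow> op" where
  "adj A = (\<lambda>s t. cnj (A t s))"

lemma adj_mmul: "adj (mmul V d A B) = mmul V d (adj B) (adj A)"
  unfolding adj_def mmul_def by (auto intro!: ext simp: mult.commute)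

lemma mpow_adj:
  assumes fin: "finite V"
  shows "s \<in> cfgs V d \<Longrightarrow> t \<in> cfgs V d \<Longrightarrow> mpow V d (adj A) k s t = cnj (mpow V d A k t s)"
proof (induction k arbitrary: s t)
  case 0 then show ?case by (simp add: mone_def)
next
  case (Suc k)
  have "mpow V d (adj A) (Suc k) s t = mmul V d (adj A) (adj (mpow V d A k)) s t"
    by (simp, rule mmul_cong) (use Suc in \<open>auto simp: adj_def\<close>)
  also have "\<dots> = cnj (mmul V d (mpow V d A k) A t s)"
    by (subst adj_mmul[symmetric]) (simp add: adj_def)
  also have "\<dots> = cnj (mpow V d A (Suc k) t s)"
    using mpow_commute[OF fin, where A = A and B = A] Suc.prems by simp
  finally show ?case .
qed

lemma mexp_adj:
  assumes fin: "finite V" and s: "s \<in> cfgs V d" and t: "t \<in> cfgs V d"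
  shows "mexp V d (adj A) s t = cnj (mexp V d A t s)"
proof -
  have "(\<lambda>k. mpow V d A k t s / of_nat (fact k)) sums mexp V d A t s"
    unfolding mexp_def using summable_mexp[OF fin t s] by (rule summable_sums)
  then have "(\<lambda>k. cnj (mpow V d A k t s / of_nat (fact k))) sums cnj (mexp V d A t s)"
    by (simp only: sums_cnj)
  then have "(\<lambda>k. mpow V d (adj A) k s t / of_nat (fact k)) sums cnj (mexp V d A t s)"
    by (simp add: mpow_adj[OF fin s t])
  then show ?thesis unfolding mexp_def by (rule sums_unique[symmetric])
qed

lemma adj_mexp_hermitian:
  assumes fin: "finite V" and her: "hermitian V d A" and s: "s \<in> cfgs V d" and t: "t \<in> cfgs V d"
  shows "adj (mexp V d A) s t = mexp V d A s t"
proof -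
  have "adj (mexp V d A) s t = mexp V d (adj A) s t"
    using mexp_adj[OF fin s t] by (simp add: adj_def)
  also have "\<dots> = mexp V d A s t"
  proof (rule mexp_cong[OF _ s t])
    fix s t assume "s \<in> cfgs V d" "t \<in> cfgs V d"
    then have "A t s = cnj (A s t)" using her unfolding hermitian_def by blast
    then show "adj A s t = A s t" unfolding adj_def by simp
  qed
  finally show ?thesis .
qed

lemma hermitian_scale:
  assumes "hermitian V d A" shows "hermitian V d (\<lambda>s t. of_real c * A s t)"
  unfolding hermitian_def
proof (intro ballI)
  fix s t assume "s \<in> cfgs V d" "t \<in> cfgs V d"
  then have "A t s = cnj (A s t)" using assms unfolding hermitian_def by blast
  then show "of_real c * A t s = cnj (of_real c * A s t)" by simp
qed

lemma mtrace_cong: "(\<And>s. s \<in> cfgs V d \<Longrightarrow> A s s = B s s) \<Longrightarrow> mtrace V d A = mtrace V d B"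
  unfolding mtrace_def by (rule sum.cong) auto

lemma mtrace_mmul_commute: "mtrace V d (mmul V d A B) = mtrace V d (mmul V d B A)"
  unfolding mtrace_def mmul_def by (subst sum.swap) (simp add: mult.commute)

lemma mtrace_mmul_adj:
  "mtrace V d (mmul V d (adj M) M) = of_real (\<Sum>s\<in>cfgs V d. \<Sum>u\<in>cfgs V d. (norm (M u s))\<^sup>2)"
  unfolding mtrace_def mmul_def adj_def
  by (simp only: of_real_sum, intro sum.cong refl)
     (simp add: complex_norm_square mult.commute del: of_real_power)

text \<open>A product of matrix exponentials is invertible.\<close>
lemma mmul_mexp_nonzero:
  assumes fin: "finite V" and s0: "s0 \<in> cfgs V d"
  shows "\<exists>s\<in>cfgs V d. \<exists>u\<in>cfgs V d. mmul V d (mexp V d A) (mexp V d B) s u \<noteq> 0"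
proof (rule ccontr)
  define M where "M = mmul V d (mexp V d A) (mexp V d B)"
  let ?P = "mexp V d (\<lambda>s t. - A s t)" and ?Q = "mexp V d (\<lambda>s t. - B s t)"
  assume "\<not> ?thesis"
  then have "\<forall>s\<in>cfgs V d. \<forall>u\<in>cfgs V d. M s u = 0" by (simp add: M_def)
  then have "mmul V d M ?Q u s0 = 0" if "u \<in> cfgs V d" for u
    using that unfolding mmul_def[of V d M] by simp
  then have "mmul V d ?P (mmul V d M ?Q) s0 s0 = 0"
    unfolding mmul_def[of V d ?P] by simp
  moreover have "mmul V d (mmul V d ?P (mexp V d A)) (mmul V d (mexp V d B) ?Q) s0 s0 = mmul V d mone mone s0 s0"
  proof (intro mmul_cong)
    fix u assume u: "u \<in> cfgs V d"
    show "mmul V d ?P (mexp V d A) s0 u = mone s0 u" by (rule mexp_neg_mmul[OF fin s0 u])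
    show "mmul V d (mexp V d B) ?Q u s0 = mone u s0"
      using mexp_neg_mmul[OF fin u s0, where A = "\<lambda>s t. - B s t"] by simp
  qed
  moreover have "mmul V d mone mone s0 s0 = 1"
    using mmul_mone_left[OF fin s0, of mone s0] by (simp add: mone_def)
  ultimately show False by (simp add: M_def mmul_assoc)
qed

lemma mtrace_mmul_adj_pos:
  assumes fin: "finite V" and su: "s \<in> cfgs V d" "u \<in> cfgs V d" "M u s \<noteq> 0"
  shows "\<exists>r>0. mtrace V d (mmul V d (adj M) M) = of_real r"
proof -
  have "0 < (norm (M u s))\<^sup>2" using su by simp
  also have "\<dots> \<le> (\<Sum>u\<in>cfgs V d. (norm (M u s))\<^sup>2)"
    by (rule member_le_sum) (use su fin finite_cfgs in auto)
  also have "\<dots> \<le> (\<Sum>s\<in>cfgs V d. \<Sum>u\<in>cfgs V d. (norm (M u s))\<^sup>2)"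
    by (rule member_le_sum[where f = "\<lambda>s. \<Sum>u\<in>cfgs V d. (norm (M u s))\<^sup>2"])
       (use su fin finite_cfgs in \<open>auto intro: sum_nonneg\<close>)
  finally show ?thesis using mtrace_mmul_adj by blast
qed

lemma mexp_half:
  assumes "finite V" "s \<in> cfgs V d" "t \<in> cfgs V d"
  shows "mexp V d A s t = mmul V d (mexp V d (\<lambda>s t. of_real (1/2) * A s t))
    (mexp V d (\<lambda>s t. of_real (1/2) * A s t)) s t"
  using mexp_add[OF assms(1) _ assms(2,3), of "\<lambda>s t. of_real (1/2) * A s t" "\<lambda>s t. of_real (1/2) * A s t"]
  by simp

lemma mtrace_mexp_mmul_eq_adj:
  assumes fin: "finite V" and hK: "hermitian V d K" and hL: "hermitian V d L"
    and M: "M = mmul V d (mexp V d (\<lambda>s t. of_real (1/2) * L s t)) (mexp V d (\<lambda>s t. of_real (1/2) * K s t))"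
  shows "mtrace V d (mmul V d (mexp V d L) (mexp V d K)) = mtrace V d (mmul V d (adj M) M)"
proof -
  define E where "E = mexp V d (\<lambda>s t. of_real (1/2) * K s t)"
  define F where "F = mexp V d (\<lambda>s t. of_real (1/2) * L s t)"
  have "mtrace V d (mmul V d (mexp V d L) (mexp V d K)) = mtrace V d (mmul V d (mmul V d F F) (mmul V d E E))"
    by (intro mtrace_cong mmul_cong) (simp_all only: E_def F_def mexp_half[OF fin, symmetric])
  also have "\<dots> = mtrace V d (mmul V d (mmul V d (mmul V d F F) E) E)"
    by (simp add: mmul_assoc)
  also have "\<dots> = mtrace V d (mmul V d E (mmul V d (mmul V d F F) E))"
    by (rule mtrace_mmul_commute)
  also have "\<dots> = mtrace V d (mmul V d (mmul V d E F) M)"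
    by (simp add: mmul_assoc M E_def F_def)
  also have "\<dots> = mtrace V d (mmul V d (adj M) M)"
  proof (intro mtrace_cong mmul_cong refl)
    fix s u assume su: "s \<in> cfgs V d" "u \<in> cfgs V d"
    have "adj M s u = mmul V d (adj E) (adj F) s u" by (simp add: M E_def F_def adj_mmul)
    also have "\<dots> = mmul V d E F s u"
      unfolding E_def F_def by (intro mmul_cong adj_mexp_hermitian[OF fin] hermitian_scale hK hL su)
    finally show "mmul V d E F s u = adj M s u" by simp
  qed
  finally show ?thesis .
qed

text \<open>The trace is the squared Frobenius norm of the invertible matrix \<open>e\<^bsup>L/2\<^esup> e\<^bsup>K/2\<^esup>\<close>.\<close>
lemma mtrace_mexp_mmul_pos:
  assumes fin: "finite V" and ne: "cfgs V d \<noteq> {}"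
    and hK: "hermitian V d K" and hL: "hermitian V d L"
  shows "\<exists>r>0. mtrace V d (mmul V d (mexp V d L) (mexp V d K)) = of_real r"
proof -
  define M where "M = mmul V d (mexp V d (\<lambda>s t. of_real (1/2) * L s t)) (mexp V d (\<lambda>s t. of_real (1/2) * K s t))"
  obtain s0 where s0: "s0 \<in> cfgs V d" using ne by auto
  obtain u s where "u \<in> cfgs V d" "s \<in> cfgs V d" "M u s \<noteq> 0"
    using mmul_mexp_nonzero[OF fin s0] unfolding M_def by blast
  then have "\<exists>r>0. mtrace V d (mmul V d (adj M) M) = of_real r"
    by (intro mtrace_mmul_adj_pos[OF fin])
  then show ?thesis by (simp only: mtrace_mexp_mmul_eq_adj[OF fin hK hL M_def])
qed

section \<open>Tensor products along a splitting of the sites\<close>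

definition cfg_merge :: "nat set \<Rightarrow> cfg \<Rightarrow> cfg \<Rightarrow> cfg" where
  "cfg_merge W x y = (\<lambda>v. if v \<in> W then x v else y v)"

text \<open>\<open>tens W\<^sub>1 W\<^sub>2 X Y\<close> is the Kronecker product \<open>X \<otimes> Y\<close> for the splitting
  \<open>V = W\<^sub>1 \<union> W\<^sub>2\<close> of the sites.\<close>
definition tens :: "nat set \<Rightarrow> nat set \<Rightarrow> op \<Rightarrow> op \<Rightarrow> op" where
  "tens W1 W2 X Y = (\<lambda>s t. X (restrict s W1) (restrict t W1) * Y (restrict s W2) (restrict t W2))"

lemma restrict_in_cfgs: "s \<in> cfgs V d \<Longrightarrow> W \<subseteq> V \<Longrightarrow> restrict s W \<in> cfgs W d"
  unfolding cfgs_def by (auto simp: PiE_def Pi_def)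

lemma merge_in_cfgs: "x \<in> cfgs W1 d \<Longrightarrow> y \<in> cfgs W2 d \<Longrightarrow> W1 \<union> W2 = V \<Longrightarrow> cfg_merge W1 x y \<in> cfgs V d"
  unfolding cfgs_def cfg_merge_def by (auto simp: PiE_def Pi_def extensional_def)

lemma restrict_merge_left: "x \<in> cfgs W1 d \<Longrightarrow> restrict (cfg_merge W1 x y) W1 = x"
  unfolding cfgs_def cfg_merge_def by (auto simp: PiE_def extensional_def restrict_def)

lemma restrict_merge_right:
  assumes "y \<in> cfgs W2 d" "W1 \<inter> W2 = {}" shows "restrict (cfg_merge W1 x y) W2 = y"
proof (rule ext)
  fix v show "restrict (cfg_merge W1 x y) W2 v = y v"
    using assms by (cases "v \<in> W2") (auto simp: cfg_merge_def restrict_def cfgs_def PiE_def extensional_def)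
qed

lemma merge_restrict: "s \<in> cfgs V d \<Longrightarrow> W1 \<union> W2 = V \<Longrightarrow> cfg_merge W1 (restrict s W1) (restrict s W2) = s"
  unfolding cfgs_def cfg_merge_def by (auto simp: PiE_def extensional_def restrict_def)

lemma sum_cfgs_split:
  assumes U: "W1 \<union> W2 = V" and D: "W1 \<inter> W2 = {}"
  shows "(\<Sum>u\<in>cfgs V d. g u) = (\<Sum>x\<in>cfgs W1 d. \<Sum>y\<in>cfgs W2 d. g (cfg_merge W1 x y))"
proof -
  have "(\<Sum>u\<in>cfgs V d. g u) = (\<Sum>p\<in>cfgs W1 d \<times> cfgs W2 d. g (cfg_merge W1 (fst p) (snd p)))"
  proof (rule sum.reindex_bij_witness[where j = "\<lambda>u. (restrict u W1, restrict u W2)"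
        and i = "\<lambda>p. cfg_merge W1 (fst p) (snd p)"])
    fix u assume u: "u \<in> cfgs V d"
    then show "cfg_merge W1 (fst (restrict u W1, restrict u W2)) (snd (restrict u W1, restrict u W2)) = u"
      and "g (cfg_merge W1 (fst (restrict u W1, restrict u W2)) (snd (restrict u W1, restrict u W2))) = g u"
      using merge_restrict[OF u U] by simp_all
    show "(restrict u W1, restrict u W2) \<in> cfgs W1 d \<times> cfgs W2 d"
      using restrict_in_cfgs[OF u] U by auto
  next
    fix p assume p: "p \<in> cfgs W1 d \<times> cfgs W2 d"
    then show "(restrict (cfg_merge W1 (fst p) (snd p)) W1, restrict (cfg_merge W1 (fst p) (snd p)) W2) = p"
      using restrict_merge_left restrict_merge_right D by (cases p) auto
    show "cfg_merge W1 (fst p) (snd p) \<in> cfgs V d" using p merge_in_cfgs U by (cases p) auto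
  qed
  also have "\<dots> = (\<Sum>x\<in>cfgs W1 d. \<Sum>y\<in>cfgs W2 d. g (cfg_merge W1 x y))"
    by (simp add: sum.cartesian_product case_prod_beta)
  finally show ?thesis .
qed

lemma tens_mmul:
  assumes U: "W1 \<union> W2 = V" and D: "W1 \<inter> W2 = {}"
  shows "mmul V d (tens W1 W2 X Y) (tens W1 W2 X' Y') s t = tens W1 W2 (mmul W1 d X X') (mmul W2 d Y Y') s t"
proof -
  have "mmul V d (tens W1 W2 X Y) (tens W1 W2 X' Y') s t
     = (\<Sum>x\<in>cfgs W1 d. \<Sum>y\<in>cfgs W2 d. X (restrict s W1) x * Y (restrict s W2) y * (X' x (restrict t W1) * Y' y (restrict t W2)))"
    unfolding mmul_def tens_def
    by (subst sum_cfgs_split[OF U D]) (intro sum.cong refl, simp add: restrict_merge_left restrict_merge_right D)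
  also have "\<dots> = (\<Sum>x\<in>cfgs W1 d. X (restrict s W1) x * X' x (restrict t W1)) * (\<Sum>y\<in>cfgs W2 d. Y (restrict s W2) y * Y' y (restrict t W2))"
    by (simp add: sum_product mult_ac)
  finally show ?thesis unfolding tens_def mmul_def .
qed

lemma mtrace_tens:
  assumes "W1 \<union> W2 = V" and D: "W1 \<inter> W2 = {}"
  shows "mtrace V d (tens W1 W2 X Y) = mtrace W1 d X * mtrace W2 d Y"
  unfolding mtrace_def tens_def
  by (subst sum_cfgs_split[OF assms]) (simp add: restrict_merge_left restrict_merge_right D sum_product cong: sum.cong)

lemma tens_mone:
  assumes U: "W1 \<union> W2 = V" and s: "s \<in> cfgs V d" and t: "t \<in> cfgs V d"
  shows "tens W1 W2 mone mone s t = mone s t"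
proof -
  have "(restrict s W1 = restrict t W1 \<and> restrict s W2 = restrict t W2) = (s = t)"
    using merge_restrict[OF s U] merge_restrict[OF t U] by metis
  then show ?thesis unfolding tens_def mone_def by auto
qed

lemma tens_commute: "tens W1 W2 X Y = tens W2 W1 Y X"
  unfolding tens_def by (simp add: mult.commute)

lemma mpow_tens:
  assumes U: "W1 \<union> W2 = V" and D: "W1 \<inter> W2 = {}"
  shows "s \<in> cfgs V d \<Longrightarrow> t \<in> cfgs V d \<Longrightarrow>
    mpow V d (tens W1 W2 X Y) k s t = tens W1 W2 (mpow W1 d X k) (mpow W2 d Y k) s t"
proof (induction k arbitrary: s t)
  case 0 then show ?case using tens_mone[OF U] by simp
next
  case (Suc k)
  have "mpow V d (tens W1 W2 X Y) (Suc k) s t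
      = mmul V d (tens W1 W2 X Y) (tens W1 W2 (mpow W1 d X k) (mpow W2 d Y k)) s t"
    by (simp, rule mmul_cong) (use Suc in auto)
  also have "\<dots> = tens W1 W2 (mpow W1 d X (Suc k)) (mpow W2 d Y (Suc k)) s t"
    by (simp add: tens_mmul[OF U D])
  finally show ?case .
qed

lemma mpow_mone: "finite V \<Longrightarrow> s \<in> cfgs V d \<Longrightarrow> mpow V d mone k s t = mone s t"
  by (induction k arbitrary: s) (simp_all add: mmul_mone_left)

lemma mexp_tens_mone:
  assumes fin: "finite V" and U: "W1 \<union> W2 = V" and D: "W1 \<inter> W2 = {}"
    and s: "s \<in> cfgs V d" and t: "t \<in> cfgs V d"
  shows "mexp V d (tens W1 W2 X mone) s t = tens W1 W2 (mexp W1 d X) mone s t"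
proof -
  have s1: "restrict s W1 \<in> cfgs W1 d" and t1: "restrict t W1 \<in> cfgs W1 d"
    and s2: "restrict s W2 \<in> cfgs W2 d"
    using restrict_in_cfgs[OF s] restrict_in_cfgs[OF t] U by auto
  have fin1: "finite W1" and fin2: "finite W2" using fin U by auto
  have "mexp V d (tens W1 W2 X mone) s t
      = (\<Sum>k. mpow W1 d X k (restrict s W1) (restrict t W1) / of_nat (fact k) * mone (restrict s W2) (restrict t W2))"
    unfolding mexp_def mpow_tens[OF U D s t]
    by (simp add: tens_def mpow_mone[OF fin2 s2])
  also have "\<dots> = tens W1 W2 (mexp W1 d X) mone s t"
    unfolding tens_def mexp_def
    by (rule suminf_mult2[symmetric, OF summable_mexp[OF fin1 s1 t1]])
  finally show ?thesis .
qed

text \<open>The summands \<open>X \<otimes> 1\<close> and \<open>1 \<otimes> Y\<close> commute.\<close>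
lemma mexp_tens_sum:
  assumes fin: "finite V" and U: "W1 \<union> W2 = V" and D: "W1 \<inter> W2 = {}"
    and s: "s \<in> cfgs V d" and t: "t \<in> cfgs V d"
  shows "mexp V d (\<lambda>s t. tens W1 W2 X mone s t + tens W1 W2 mone Y s t) s t
    = tens W1 W2 (mexp W1 d X) (mexp W2 d Y) s t"
proof -
  have U': "W2 \<union> W1 = V" and D': "W2 \<inter> W1 = {}" using U D by auto
  have fin1: "finite W1" and fin2: "finite W2" using fin U by auto
  have units: "mmul V d (tens W1 W2 X' mone) (tens W1 W2 mone Y') s t = tens W1 W2 X' Y' s t"
    "mmul V d (tens W1 W2 mone Y') (tens W1 W2 X' mone) s t = tens W1 W2 X' Y' s t"
    if s: "s \<in> cfgs V d" and t: "t \<in> cfgs V d" for X' Y' s t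
  proof -
    have "restrict s W1 \<in> cfgs W1 d" "restrict t W1 \<in> cfgs W1 d"
      "restrict s W2 \<in> cfgs W2 d" "restrict t W2 \<in> cfgs W2 d"
      using restrict_in_cfgs[OF s] restrict_in_cfgs[OF t] U by auto
    then show "mmul V d (tens W1 W2 X' mone) (tens W1 W2 mone Y') s t = tens W1 W2 X' Y' s t"
      "mmul V d (tens W1 W2 mone Y') (tens W1 W2 X' mone) s t = tens W1 W2 X' Y' s t"
      unfolding tens_mmul[OF U D] by (simp_all add: tens_def mmul_mone_left mmul_mone_right fin1 fin2)
  qed
  have "mexp V d (\<lambda>s t. tens W1 W2 X mone s t + tens W1 W2 mone Y s t) s t
      = mmul V d (mexp V d (tens W1 W2 X mone)) (mexp V d (tens W1 W2 mone Y)) s t"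
    by (rule mexp_add[OF fin _ s t]) (simp add: units)
  also have "\<dots> = mmul V d (tens W1 W2 (mexp W1 d X) mone) (tens W1 W2 mone (mexp W2 d Y)) s t"
  proof (rule mmul_cong)
    fix u assume u: "u \<in> cfgs V d"
    show "mexp V d (tens W1 W2 X mone) s u = tens W1 W2 (mexp W1 d X) mone s u"
      by (rule mexp_tens_mone[OF fin U D s u])
    show "mexp V d (tens W1 W2 mone Y) u t = tens W1 W2 mone (mexp W2 d Y) u t"
      using mexp_tens_mone[OF fin U' D' u t] by (simp add: tens_commute)
  qed
  also have "\<dots> = tens W1 W2 (mexp W1 d X) (mexp W2 d Y) s t"
    by (rule units(1)[OF s t])
  finally show ?thesis .
qed

section \<open>Gibbs expectation values\<close>

lemma mtrace_mmul_divide: "mtrace V d (mmul V d A (\<lambda>s t. B s t / c)) = mtrace V d (mmul V d A B) / c"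
  unfolding mtrace_def mmul_def by (simp add: sum_divide_distrib)

definition gibbs_expval :: "nat set \<Rightarrow> (nat \<Rightarrow> nat) \<Rightarrow> op \<Rightarrow> op \<Rightarrow> complex" where
  "gibbs_expval W d K L = mtrace W d (mmul W d (mexp W d L) (mexp W d K)) / mtrace W d (mexp W d K)"

lemma gibbs_expval_pos:
  assumes fin: "finite W" and ne: "cfgs W d \<noteq> {}" and hK: "hermitian W d K" and hL: "hermitian W d L"
  shows "\<exists>r>0. gibbs_expval W d K L = of_real r"
proof -
  obtain r1 where r1: "r1 > 0" "mtrace W d (mmul W d (mexp W d L) (mexp W d K)) = of_real r1"
    using mtrace_mexp_mmul_pos[OF fin ne hK hL] by blast
  have "hermitian W d (\<lambda>s t. 0)" unfolding hermitian_def by simp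
  then obtain r2 where r2: "r2 > 0" "mtrace W d (mmul W d (mexp W d (\<lambda>s t. 0)) (mexp W d K)) = of_real r2"
    using mtrace_mexp_mmul_pos[OF fin ne hK] by blast
  have "mtrace W d (mmul W d (mexp W d (\<lambda>s t. 0)) (mexp W d K)) = mtrace W d (mexp W d K)"
    by (intro mtrace_cong) (simp add: mexp_zero[abs_def] mmul_mone_left fin)
  then show ?thesis
    using r1 r2 unfolding gibbs_expval_def by (intro exI[of _ "r1 / r2"]) simp
qed

lemma gibbs_expval_zero:
  assumes "finite W" "cfgs W d \<noteq> {}"
  shows "gibbs_expval W d (\<lambda>_ _. 0) (\<lambda>_ _. 0) = 1"
proof -
  have "mtrace W d (mmul W d (mexp W d (\<lambda>_ _. 0)) (mexp W d (\<lambda>_ _. 0))) = mtrace W d mone"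
    by (intro mtrace_cong) (simp add: mexp_zero[abs_def] mmul_mone_left assms(1))
  moreover have "mtrace W d mone = of_nat (card (cfgs W d))"
    unfolding mtrace_def mone_def by simp
  moreover have "card (cfgs W d) \<noteq> 0" using assms finite_cfgs by auto
  ultimately show ?thesis unfolding gibbs_expval_def by (simp add: mexp_zero[abs_def])
qed

lemma gibbs_expval_no_sites: "gibbs_expval {} d K L = exp (L (\<lambda>_. undefined) (\<lambda>_. undefined))"
proof -
  have "mpow {} d A k (\<lambda>_. undefined) (\<lambda>_. undefined) = A (\<lambda>_. undefined) (\<lambda>_. undefined) ^ k" for A k
    by (induction k) (simp_all add: mmul_def cfgs_empty mone_def)
  then have "mexp {} d A (\<lambda>_. undefined) (\<lambda>_. undefined) = exp (A (\<lambda>_. undefined) (\<lambda>_. undefined))" for A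
    unfolding mexp_def exp_def by (simp add: scaleR_conv_of_real divide_inverse mult.commute)
  then show ?thesis
    unfolding gibbs_expval_def mtrace_def mmul_def cfgs_empty by (simp add: exp_not_eq_zero)
qed

lemma gibbs_expval_tens:
  assumes fin: "finite V" and U: "W1 \<union> W2 = V" and D: "W1 \<inter> W2 = {}"
    and K: "\<And>s t. s \<in> cfgs V d \<Longrightarrow> t \<in> cfgs V d \<Longrightarrow> K s t = tens W1 W2 K1 mone s t + tens W1 W2 mone K2 s t"
    and L: "\<And>s t. s \<in> cfgs V d \<Longrightarrow> t \<in> cfgs V d \<Longrightarrow> L s t = tens W1 W2 L1 mone s t + tens W1 W2 mone L2 s t"
  shows "gibbs_expval V d K L = gibbs_expval W1 d K1 L1 * gibbs_expval W2 d K2 L2"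
proof -
  have eK: "mexp V d K s t = tens W1 W2 (mexp W1 d K1) (mexp W2 d K2) s t"
    if "s \<in> cfgs V d" "t \<in> cfgs V d" for s t
    using mexp_cong[OF K that] mexp_tens_sum[OF fin U D that] by simp
  have eL: "mexp V d L s t = tens W1 W2 (mexp W1 d L1) (mexp W2 d L2) s t"
    if "s \<in> cfgs V d" "t \<in> cfgs V d" for s t
    using mexp_cong[OF L that] mexp_tens_sum[OF fin U D that] by simp
  have "mtrace V d (mmul V d (mexp V d L) (mexp V d K))
      = mtrace V d (mmul V d (tens W1 W2 (mexp W1 d L1) (mexp W2 d L2)) (tens W1 W2 (mexp W1 d K1) (mexp W2 d K2)))"
    by (intro mtrace_cong mmul_cong) (simp_all add: eK eL)
  also have "\<dots> = mtrace W1 d (mmul W1 d (mexp W1 d L1) (mexp W1 d K1)) * mtrace W2 d (mmul W2 d (mexp W2 d L2) (mexp W2 d K2))"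
    unfolding tens_mmul[OF U D, abs_def] by (rule mtrace_tens[OF U D])
  finally have num: "mtrace V d (mmul V d (mexp V d L) (mexp V d K))
      = mtrace W1 d (mmul W1 d (mexp W1 d L1) (mexp W1 d K1)) * mtrace W2 d (mmul W2 d (mexp W2 d L2) (mexp W2 d K2))" .
  have "mtrace V d (mexp V d K) = mtrace V d (tens W1 W2 (mexp W1 d K1) (mexp W2 d K2))"
    by (intro mtrace_cong) (simp add: eK)
  then have den: "mtrace V d (mexp V d K) = mtrace W1 d (mexp W1 d K1) * mtrace W2 d (mexp W2 d K2)"
    by (simp add: mtrace_tens[OF U D])
  show ?thesis unfolding gibbs_expval_def num den by simp
qed

lemma ln_gibbs_expval_tens:
  assumes fin: "finite V" and U: "W1 \<union> W2 = V" and D: "W1 \<inter> W2 = {}"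
    and ne1: "cfgs W1 d \<noteq> {}" and ne2: "cfgs W2 d \<noteq> {}"
    and herm1: "hermitian W1 d K1" "hermitian W1 d L1" and herm2: "hermitian W2 d K2" "hermitian W2 d L2"
    and K: "\<And>s t. s \<in> cfgs V d \<Longrightarrow> t \<in> cfgs V d \<Longrightarrow> K s t = tens W1 W2 K1 mone s t + tens W1 W2 mone K2 s t"
    and L: "\<And>s t. s \<in> cfgs V d \<Longrightarrow> t \<in> cfgs V d \<Longrightarrow> L s t = tens W1 W2 L1 mone s t + tens W1 W2 mone L2 s t"
  shows "ln (Re (gibbs_expval V d K L)) = ln (Re (gibbs_expval W1 d K1 L1)) + ln (Re (gibbs_expval W2 d K2 L2))"
proof -
  have "finite W1" "finite W2" using fin U by auto
  then obtain r1 r2 where "r1 > 0" "gibbs_expval W1 d K1 L1 = of_real r1"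
    and "r2 > 0" "gibbs_expval W2 d K2 L2 = of_real r2"
    using gibbs_expval_pos[OF _ ne1 herm1] gibbs_expval_pos[OF _ ne2 herm2] by meson
  then show ?thesis by (simp add: gibbs_expval_tens[OF fin U D K L] ln_mult)
qed

section \<open>Local Hamiltonians\<close>

definition ham :: "real \<Rightarrow> nat set set \<Rightarrow> (nat set \<Rightarrow> op) \<Rightarrow> (nat set \<Rightarrow> real) \<Rightarrow> op" where
  "ham c S h a = (\<lambda>s t. of_real c * (\<Sum>X\<in>S. of_real (a X) * h X s t))"

definition op_slice :: "nat set \<Rightarrow> cfg \<Rightarrow> op \<Rightarrow> op" where
  "op_slice W z A = (\<lambda>x x'. A (cfg_merge W x z) (cfg_merge W x' z))"

lemma ham_fun_upd: "X \<notin> S \<Longrightarrow> ham c S h (a(X := r)) = ham c S h a"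
  unfolding ham_def by (intro ext) (auto intro!: sum.cong)

lemma ham_empty: "ham c {} h a = (\<lambda>s t. 0)"
  unfolding ham_def by simp

lemma hermitian_ham:
  assumes "\<forall>X\<in>S. hermitian V d (h X)" shows "hermitian V d (ham c S h a)"
  unfolding hermitian_def
proof (intro ballI)
  fix s t assume "s \<in> cfgs V d" "t \<in> cfgs V d"
  then have "h X t s = cnj (h X s t)" if "X \<in> S" for X
    using assms that unfolding hermitian_def by blast
  then show "ham c S h a t s = cnj (ham c S h a s t)"
    unfolding ham_def by (simp add: cnj_sum)
qed

lemma hermitian_op_slice:
  assumes her: "hermitian V d A" and U: "W1 \<union> W2 = V" and z: "z \<in> cfgs W2 d"
  shows "hermitian W1 d (op_slice W1 z A)"
  unfolding hermitian_def op_slice_def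
  using her merge_in_cfgs[OF _ z U] unfolding hermitian_def by blast

lemma supported_on_tens:
  assumes sup: "supported_on V d X A" and XW: "X \<subseteq> W1" and U: "W1 \<union> W2 = V" and D: "W1 \<inter> W2 = {}"
    and y0: "y0 \<in> cfgs W2 d" and s: "s \<in> cfgs V d" and t: "t \<in> cfgs V d"
  shows "A s t = tens W1 W2 (op_slice W1 y0 A) mone s t"
proof -
  obtain g where g: "\<forall>s\<in>cfgs V d. \<forall>t\<in>cfgs V d.
      A s t = (if \<forall>v\<in>V - X. s v = t v then g (restrict s X) (restrict t X) else 0)"
    using sup unfolding supported_on_def by blast
  define p where "p = cfg_merge W1 (restrict s W1) y0"
  define q where "q = cfg_merge W1 (restrict t W1) y0"
  have p: "p \<in> cfgs V d" and q: "q \<in> cfgs V d"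
    unfolding p_def q_def using merge_in_cfgs[OF restrict_in_cfgs y0 U] s t U by auto
  have "restrict p X = restrict s X" "restrict q X = restrict t X"
    using XW unfolding p_def q_def cfg_merge_def restrict_def by (auto intro!: ext)
  moreover have "(\<forall>v\<in>V - X. p v = q v) = (\<forall>v\<in>W1 - X. s v = t v)"
    using U D unfolding p_def q_def cfg_merge_def by auto
  ultimately have Apq: "A p q = (if \<forall>v\<in>W1 - X. s v = t v then g (restrict s X) (restrict t X) else 0)"
    using g p q by simp
  have "(\<forall>v\<in>V - X. s v = t v) = ((\<forall>v\<in>W1 - X. s v = t v) \<and> restrict s W2 = restrict t W2)"
    using U D XW by (auto simp: fun_eq_iff restrict_def)
  then have "A s t = (if (\<forall>v\<in>W1 - X. s v = t v) \<and> restrict s W2 = restrict t W2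
      then g (restrict s X) (restrict t X) else 0)"
    using g s t by simp
  then show ?thesis unfolding tens_def mone_def op_slice_def using Apq by (simp add: p_def q_def)
qed

lemma ham_tens:
  assumes sup: "\<forall>X\<in>S. supported_on V d X (h X) \<and> X \<subseteq> W1"
    and U: "W1 \<union> W2 = V" and D: "W1 \<inter> W2 = {}"
    and y0: "y0 \<in> cfgs W2 d" and s: "s \<in> cfgs V d" and t: "t \<in> cfgs V d"
  shows "ham c S h a s t = tens W1 W2 (op_slice W1 y0 (ham c S h a)) mone s t"
proof -
  have "h X s t = tens W1 W2 (op_slice W1 y0 (h X)) mone s t" if "X \<in> S" for X
    using supported_on_tens[OF _ _ U D y0 s t] sup that by blast
  then show ?thesis
    unfolding ham_def by (simp add: tens_def op_slice_def sum_distrib_left mult_ac cong: sum.cong)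
qed

lemma ham_split_tens:
  assumes finE: "finite E" and S: "S1 \<union> S2 \<subseteq> E" and SD: "S1 \<inter> S2 = {}"
    and a0: "\<forall>X. X \<notin> S1 \<union> S2 \<longrightarrow> a X = 0"
    and U: "W1 \<union> W2 = V" and D: "W1 \<inter> W2 = {}"
    and x0: "x0 \<in> cfgs W1 d" and y0: "y0 \<in> cfgs W2 d" and s: "s \<in> cfgs V d" and t: "t \<in> cfgs V d"
    and sup1: "\<forall>X\<in>S1. supported_on V d X (h X) \<and> X \<subseteq> W1"
    and sup2: "\<forall>X\<in>S2. supported_on V d X (h X) \<and> X \<subseteq> W2"
  shows "ham c E h a s t
     = tens W1 W2 (op_slice W1 y0 (ham c S1 h a)) mone s t + tens W1 W2 mone (op_slice W2 x0 (ham c S2 h a)) s t"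
proof -
  have fin1: "finite S1" and fin2: "finite S2" using finE S finite_subset by auto
  have "(\<Sum>X\<in>E. of_real (a X) * h X s t) = (\<Sum>X\<in>S1 \<union> S2. of_real (a X) * h X s t)"
    by (rule sum.mono_neutral_right[OF finE S]) (use a0 in auto)
  then have "ham c E h a s t = ham c S1 h a s t + ham c S2 h a s t"
    unfolding ham_def by (simp add: sum.union_disjoint[OF fin1 fin2 SD] distrib_left)
  moreover have "ham c S2 h a s t = tens W1 W2 mone (op_slice W2 x0 (ham c S2 h a)) s t"
    using ham_tens[OF sup2 _ _ x0 s t] U D by (auto simp: tens_commute)
  ultimately show ?thesis using ham_tens[OF sup1 U D y0 s t] by simp
qed

section \<open>Partial derivatives in the parameters\<close>

type_synonym param_fun = "(nat set \<Rightarrow> real) \<Rightarrow> (nat set \<Rightarrow> real) \<Rightarrow> real"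

definition pd :: "nat set + nat set \<Rightarrow> param_fun \<Rightarrow> param_fun" where
  "pd = case_sum pda pdb"

definition pds :: "(nat set + nat set) list \<Rightarrow> param_fun \<Rightarrow> param_fun" where
  "pds cs F = foldr pd cs F"

fun independent_of :: "nat set + nat set \<Rightarrow> param_fun \<Rightarrow> bool" where
  "independent_of (Inl X) F \<longleftrightarrow> (\<forall>a b r. F (a(X := r)) b = F a b)"
| "independent_of (Inr X) F \<longleftrightarrow> (\<forall>a b r. F a (b(X := r)) = F a b)"

lemma Da_Db_eq_pds: "Da w2 (Db w1 F) = pds (map Inl w2 @ map Inr w1) F"
  unfolding Da_def Db_def pds_def by (simp add: foldr_map pd_def comp_def)

lemma pds_Cons: "pds (c # cs) F = pd c (pds cs F)"
  unfolding pds_def by simp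

lemma pds_snoc: "pds (cs @ [c]) F = pds cs (pd c F)"
  unfolding pds_def by simp

lemma independent_of_const: "independent_of c (\<lambda>a b. k)"
  by (cases c) auto

lemma pd_independent: "independent_of c F \<Longrightarrow> pd c F = (\<lambda>a b. 0)"
  by (cases c) (auto simp: pd_def pda_def pdb_def)

lemma pds_zero: "pds cs (\<lambda>a b. 0) = (\<lambda>a b. 0)"
  by (induction cs) (simp_all add: pds_Cons pd_independent independent_of_const, simp add: pds_def)

lemma independent_of_pd:
  assumes F: "independent_of c F" shows "independent_of c (pd e F)"
proof (cases "e = c")
  case True
  then show ?thesis using pd_independent[OF F] independent_of_const by simp
next
  case False
  show ?thesis
  proof (cases c; cases e)
    fix X Y assume c: "c = Inl X" and e: "e = Inl Y"
    with False have "X \<noteq> Y" by simp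
    with F show ?thesis by (simp add: c e pd_def pda_def fun_upd_twist[of X Y])
  next
    fix X Y assume c: "c = Inr X" and e: "e = Inr Y"
    with False have "X \<noteq> Y" by simp
    with F show ?thesis by (simp add: c e pd_def pdb_def fun_upd_twist[of X Y])
  qed (use F in \<open>simp_all add: pd_def pda_def pdb_def\<close>)
qed

lemma independent_of_pds: "independent_of c F \<Longrightarrow> independent_of c (pds cs F)"
  by (induction cs) (simp_all add: pds_Cons independent_of_pd, simp add: pds_def)

lemma pds_independent: "c \<in> set cs \<Longrightarrow> independent_of c F \<Longrightarrow> pds cs F = (\<lambda>a b. 0)"
proof (induction cs)
  case (Cons e cs)
  show ?case
  proof (cases "c \<in> set cs")
    case True
    then show ?thesis using Cons by (simp add: pds_Cons pd_independent independent_of_const)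
  next
    case False
    then have "e = c" using Cons.prems by simp
    then show ?thesis
      using pd_independent[OF independent_of_pds[OF Cons.prems(2)]] by (simp add: pds_Cons)
  qed
qed simp

lemma deriv_const_add: "deriv (\<lambda>t. k + f t) x = deriv f (x :: real)"
  unfolding deriv_def has_real_derivative_iff_has_vector_derivative
  by (simp add: add.commute[of k] has_vector_derivative_add_const)

lemma pd_add_independent: "independent_of c F \<Longrightarrow> pd c (\<lambda>a b. F a b + G a b) = pd c G"
  by (cases c) (auto simp: pd_def pda_def pdb_def deriv_const_add)

lemma pds_separated_sum_last:
  assumes F: "\<forall>c\<in>-C. independent_of c F" and G: "\<forall>c\<in>C. independent_of c G"
    and c': "c' \<in> set cs" "c' \<notin> C" and x: "x \<in> C"
  shows "pds (cs @ [x]) (\<lambda>a b. F a b + G a b) = (\<lambda>a b. 0)"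
proof -
  have "pd x (\<lambda>a b. F a b + G a b) = pd x F"
    using pd_add_independent[of x G F] G x by (simp add: add.commute)
  moreover have "independent_of c' (pd x F)" using F c' by (intro independent_of_pd) auto
  ultimately show ?thesis using c' by (simp add: pds_snoc pds_independent)
qed

lemma pds_separated_sum:
  assumes F: "\<forall>c\<in>-C. independent_of c F" and G: "\<forall>c\<in>C. independent_of c G"
    and c: "c \<in> set cs" "c \<in> C" and c': "c' \<in> set cs" "c' \<notin> C"
  shows "pds cs (\<lambda>a b. F a b + G a b) = (\<lambda>a b. 0)"
proof -
  obtain cs0 x where cs: "cs = cs0 @ [x]" using c by (cases cs rule: rev_cases) auto
  show ?thesis
  proof (cases "x \<in> C")
    case True
    then show ?thesis using pds_separated_sum_last[OF F G _ _ True, of c'] c' cs by auto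
  next
    case False
    then have "pds cs (\<lambda>a b. G a b + F a b) = (\<lambda>a b. 0)"
      using pds_separated_sum_last[of "-C" G F c cs0 x] F G c cs by auto
    then show ?thesis by (simp add: add.commute)
  qed
qed

lemma pds_linear:
  assumes "2 \<le> length cs"
  shows "pds cs (\<lambda>a b. \<kappa> * b Z) = (\<lambda>a b. 0)"
proof -
  obtain cs0 x where cs: "cs = cs0 @ [x]"
    using assms by (cases cs rule: rev_cases) auto
  with assms have "cs0 \<noteq> []" by auto
  then obtain c where c: "c \<in> set cs0" by (cases cs0) auto
  show ?thesis
  proof (cases "x = Inr Z")
    case True
    then have "pd x (\<lambda>a b. \<kappa> * b Z) = (\<lambda>a b. \<kappa>)"
      by (auto simp: pd_def pdb_def)
    then show ?thesis using c by (simp add: cs pds_snoc pds_independent independent_of_const)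
  next
    case False
    then have "independent_of x (\<lambda>a b. \<kappa> * b Z)" by (cases x) auto
    then show ?thesis by (simp add: cs pds_snoc pd_independent pds_zero)
  qed
qed

lemma pds_cong_params:
  assumes eq: "\<And>a b. \<forall>X. X \<notin> S \<longrightarrow> a X = 0 \<and> b X = 0 \<Longrightarrow> F a b = G a b"
    and cs: "set cs \<subseteq> S <+> S"
  shows "\<forall>X. X \<notin> S \<longrightarrow> a X = 0 \<and> b X = 0 \<Longrightarrow> pds cs F a b = pds cs G a b"
  using cs
proof (induction cs arbitrary: a b)
  case Nil then show ?case using eq by (simp add: pds_def)
next
  case (Cons c cs)
  have IH: "\<And>a b. \<forall>X. X \<notin> S \<longrightarrow> a X = 0 \<and> b X = 0 \<Longrightarrow> pds cs F a b = pds cs G a b"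
    using Cons by simp
  show ?case
  proof (cases c)
    case (Inl X)
    with Cons.prems have "X \<in> S" by auto
    then have "pds cs F (a(X := r)) b = pds cs G (a(X := r)) b" for r
      using Cons.prems(1) by (intro IH) auto
    then show ?thesis by (simp add: pds_Cons Inl pd_def pda_def)
  next
    case (Inr X)
    with Cons.prems have "X \<in> S" by auto
    then have "pds cs F a (b(X := r)) = pds cs G a (b(X := r))" for r
      using Cons.prems(1) by (intro IH) auto
    then show ?thesis by (simp add: pds_Cons Inr pd_def pdb_def)
  qed
qed

section \<open>Separated clusters\<close>

definition local_terms :: "nat set \<Rightarrow> (nat \<Rightarrow> nat) \<Rightarrow> nat set set \<Rightarrow> (nat set \<Rightarrow> op) \<Rightarrow> bool" where
  "local_terms V d S h \<longleftrightarrow> (\<forall>X\<in>S. hermitian V d (h X) \<and> supported_on V d X (h X))"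

lemma local_terms_subset: "S \<subseteq> E \<Longrightarrow> local_terms V d E h \<Longrightarrow> local_terms V d S h"
  unfolding local_terms_def by blast

lemma ln_gibbs_expval_ham_split:
  assumes fin: "finite V" and U: "W1 \<union> W2 = V" and D: "W1 \<inter> W2 = {}"
    and x0: "x0 \<in> cfgs W1 d" and y0: "y0 \<in> cfgs W2 d"
    and finE: "finite E" and S: "S1 \<union> S2 \<subseteq> E" and SD: "S1 \<inter> S2 = {}"
    and vanish: "\<forall>X. X \<notin> S1 \<union> S2 \<longrightarrow> a X = 0 \<and> b X = 0"
    and loc: "local_terms V d (S1 \<union> S2) h" "local_terms V d (S1 \<union> S2) f"
    and sub: "\<forall>X\<in>S1. X \<subseteq> W1" "\<forall>X\<in>S2. X \<subseteq> W2"
  shows "ln (Re (gibbs_expval V d (ham c E h a) (ham c' E f b)))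
    = ln (Re (gibbs_expval W1 d (op_slice W1 y0 (ham c S1 h a)) (op_slice W1 y0 (ham c' S1 f b))))
    + ln (Re (gibbs_expval W2 d (op_slice W2 x0 (ham c S2 h a)) (op_slice W2 x0 (ham c' S2 f b))))"
proof (rule ln_gibbs_expval_tens[OF fin U D])
  have U': "W2 \<union> W1 = V" using U by auto
  show "cfgs W1 d \<noteq> {}" "cfgs W2 d \<noteq> {}" using x0 y0 by auto
  show "hermitian W1 d (op_slice W1 y0 (ham c S1 h a))" "hermitian W1 d (op_slice W1 y0 (ham c' S1 f b))"
    "hermitian W2 d (op_slice W2 x0 (ham c S2 h a))" "hermitian W2 d (op_slice W2 x0 (ham c' S2 f b))"
    using loc unfolding local_terms_def
    by (auto intro!: hermitian_op_slice[OF _ U y0] hermitian_op_slice[OF _ U' x0] hermitian_ham)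
  show "ham c E h a s t = tens W1 W2 (op_slice W1 y0 (ham c S1 h a)) mone s t
      + tens W1 W2 mone (op_slice W2 x0 (ham c S2 h a)) s t"
    and "ham c' E f b s t = tens W1 W2 (op_slice W1 y0 (ham c' S1 f b)) mone s t
      + tens W1 W2 mone (op_slice W2 x0 (ham c' S2 f b)) s t"
    if "s \<in> cfgs V d" "t \<in> cfgs V d" for s t
    using loc sub vanish unfolding local_terms_def
    by (auto intro!: ham_split_tens[OF finE S SD _ U D x0 y0 that])
qed

text \<open>The two summands of the factorised log-expectation depend on disjoint sets of
  parameters, so every mixed derivative meeting both of them vanishes.\<close>
lemma pds_ln_gibbs_expval_separated:
  assumes fin: "finite V" and dpos: "\<forall>v\<in>V. d v > 0" and finE: "finite E"
    and E: "\<forall>X\<in>E. X \<subseteq> V" and loc: "local_terms V d E h" "local_terms V d E f"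
    and S: "S1 \<union> S2 \<subseteq> E" "S1 \<inter> S2 = {}" and W: "\<forall>X\<in>S1. X \<subseteq> W" "\<forall>X\<in>S2. X \<inter> W = {}"
    and cs: "set cs \<subseteq> (S1 \<union> S2) <+> (S1 \<union> S2)"
    and c1: "c1 \<in> set cs" "c1 \<in> S1 <+> S1" and c2: "c2 \<in> set cs" "c2 \<in> S2 <+> S2"
  shows "pds cs (\<lambda>a b. ln (Re (gibbs_expval V d (ham c E h a) (ham c' E f b)))) (\<lambda>_. 0) (\<lambda>_. 0) = 0"
proof -
  define W1 where "W1 = V \<inter> W"
  define W2 where "W2 = V - W"
  have U: "W1 \<union> W2 = V" and D: "W1 \<inter> W2 = {}" by (auto simp: W1_def W2_def)
  obtain x0 y0 where x0: "x0 \<in> cfgs W1 d" and y0: "y0 \<in> cfgs W2 d"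
    using cfgs_nonempty[of W1 d] cfgs_nonempty[of W2 d] dpos by (auto simp: W1_def W2_def)
  have c2_out: "c2 \<notin> S1 <+> S1" using c2(2) S(2) by auto
  define G1 where "G1 = (\<lambda>a b. ln (Re (gibbs_expval W1 d (op_slice W1 y0 (ham c S1 h a)) (op_slice W1 y0 (ham c' S1 f b)))))"
  define G2 where "G2 = (\<lambda>a b. ln (Re (gibbs_expval W2 d (op_slice W2 x0 (ham c S2 h a)) (op_slice W2 x0 (ham c' S2 f b)))))"
  have "ln (Re (gibbs_expval V d (ham c E h a) (ham c' E f b))) = G1 a b + G2 a b"
    if "\<forall>X. X \<notin> S1 \<union> S2 \<longrightarrow> a X = 0 \<and> b X = 0" for a b
    unfolding G1_def G2_def
    by (rule ln_gibbs_expval_ham_split[OF fin U D x0 y0 finE S that])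
       (use loc S E W in \<open>auto simp: local_terms_def W1_def W2_def\<close>)
  then have "pds cs (\<lambda>a b. ln (Re (gibbs_expval V d (ham c E h a) (ham c' E f b)))) (\<lambda>_. 0) (\<lambda>_. 0)
      = pds cs (\<lambda>a b. G1 a b + G2 a b) (\<lambda>_. 0) (\<lambda>_. 0)"
    by (intro pds_cong_params[OF _ cs]) auto
  also have "pds cs (\<lambda>a b. G1 a b + G2 a b) = (\<lambda>a b. 0)"
  proof (rule pds_separated_sum[OF _ _ c1 c2(1) c2_out])
    show "\<forall>x\<in>- (S1 <+> S1). independent_of x G1"
    proof
      fix x assume "x \<in> - (S1 <+> S1)"
      then show "independent_of x G1" by (cases x) (auto simp: G1_def ham_fun_upd)
    qed
    show "\<forall>x\<in>S1 <+> S1. independent_of x G2"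
    proof
      fix x assume "x \<in> S1 <+> S1"
      then have "x \<notin> S2 <+> S2" using S(2) by auto
      then show "independent_of x G2" by (cases x) (auto simp: G2_def ham_fun_upd)
    qed
  qed
  finally show ?thesis by simp
qed

text \<open>If only the empty set carries parameters, \<open>h\<^sub>{}\<close> and \<open>f\<^sub>{}\<close> are multiples of the
  identity: the log-expectation is linear in \<open>b\<^sub>{}\<close> and independent of \<open>a\<^sub>{}\<close>.\<close>
lemma pds_ln_gibbs_expval_empty_terms:
  assumes fin: "finite V" and dpos: "\<forall>v\<in>V. d v > 0" and finE: "finite E"
    and loc: "local_terms V d E h" "local_terms V d E f" and E: "{} \<in> E"
    and cs: "set cs \<subseteq> {{}} <+> {{}}" and len: "2 \<le> length cs"
  shows "pds cs (\<lambda>a b. ln (Re (gibbs_expval V d (ham c E h a) (ham c' E f b)))) (\<lambda>_. 0) (\<lambda>_. 0) = 0"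
proof -
  obtain z where z: "z \<in> cfgs V d" using cfgs_nonempty[OF dpos] by blast
  define e :: cfg where "e = (\<lambda>_. undefined)"
  have e: "e \<in> cfgs {} d" by (simp add: e_def cfgs_empty)
  have "f {} z z = cnj (f {} z z)" using loc(2) E z unfolding local_terms_def hermitian_def by blast
  then have "Im (f {} z z) = 0" by (metis cnj.sel(2) neg_equal_zero)
  then have f_real: "f {} z z = of_real (Re (f {} z z))" by (simp add: complex_eq_iff)
  have "ln (Re (gibbs_expval V d (ham c E h a) (ham c' E f b))) = c' * Re (f {} z z) * b {}"
    if vanish: "\<forall>X. X \<notin> {{}} \<longrightarrow> a X = 0 \<and> b X = 0" for a b
  proof -
    have "ln (Re (gibbs_expval V d (ham c E h a) (ham c' E f b)))
      = ln (Re (gibbs_expval {} d (op_slice {} z (ham c {{}} h a)) (op_slice {} z (ham c' {{}} f b))))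
      + ln (Re (gibbs_expval V d (op_slice V e (ham c {} h a)) (op_slice V e (ham c' {} f b))))"
      using E by (intro ln_gibbs_expval_ham_split[OF fin _ _ e z finE] local_terms_subset[OF _ loc(1)]
          local_terms_subset[OF _ loc(2)]) (simp_all add: vanish)
    also have "gibbs_expval V d (op_slice V e (ham c {} h a)) (op_slice V e (ham c' {} f b)) = 1"
      using gibbs_expval_zero[OF fin] z by (auto simp: ham_empty op_slice_def)
    also have "op_slice {} z (ham c' {{}} f b) e e = of_real (c' * Re (f {} z z) * b {})"
      using f_real by (simp add: op_slice_def ham_def cfg_merge_def)
    then have "gibbs_expval {} d (op_slice {} z (ham c {{}} h a)) (op_slice {} z (ham c' {{}} f b))
        = of_real (exp (c' * Re (f {} z z) * b {}))"
      by (simp add: gibbs_expval_no_sites e_def flip: exp_of_real)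
    finally show ?thesis by simp
  qed
  then have "pds cs (\<lambda>a b. ln (Re (gibbs_expval V d (ham c E h a) (ham c' E f b)))) (\<lambda>_. 0) (\<lambda>_. 0)
      = pds cs (\<lambda>a b. c' * Re (f {} z z) * b {}) (\<lambda>_. 0) (\<lambda>_. 0)"
    by (intro pds_cong_params[OF _ cs]) auto
  also have "\<dots> = 0" by (simp add: pds_linear[OF len])
  finally show ?thesis .
qed

lemma not_connected_cluster_size: "\<not> connected_cluster w \<Longrightarrow> 2 \<le> size w"
  unfolding connected_cluster_def
  by (auto simp flip: size_eq_0_iff_empty)

lemma not_connected_cluster_separation:
  assumes nc: "\<not> connected_cluster w" and X0: "X0 \<in># w" "X0 \<noteq> {}"
  shows "\<exists>S1 S2 W. set_mset w = S1 \<union> S2 \<and> S1 \<inter> S2 = {} \<and> X0 \<in> S1 \<and> S2 \<noteq> {}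
    \<and> (\<forall>X\<in>S1. X \<subseteq> W) \<and> (\<forall>X\<in>S2. X \<inter> W = {})"
proof -
  obtain u1 u2 where w: "w = u1 + u2" and u2: "u2 \<noteq> {#}" and dj: "Vw u1 \<inter> Vw u2 = {}"
    and X0u1: "X0 \<in># u1"
  proof -
    obtain v1 v2 where "w = v1 + v2" "v1 \<noteq> {#}" "v2 \<noteq> {#}" "Vw v1 \<inter> Vw v2 = {}"
      using nc unfolding connected_cluster_def by blast
    then show thesis
      using that[of v1 v2] that[of v2 v1] X0(1) by (auto simp: add.commute Int_commute)
  qed
  define S1 where "S1 = set_mset u1 - {{}}"
  have in_Vw: "X \<subseteq> Vw u" if "X \<in># u" for X u using that unfolding Vw_def by auto
  show ?thesis
  proof (intro exI conjI)
    show "set_mset w = S1 \<union> (set_mset w - S1)" "S1 \<inter> (set_mset w - S1) = {}"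
      by (auto simp: S1_def w)
    show "X0 \<in> S1" using X0u1 X0(2) by (simp add: S1_def)
    show "\<forall>X\<in>S1. X \<subseteq> Vw u1" using in_Vw by (simp add: S1_def)
    obtain Y where Y: "Y \<in># u2" using u2 by blast
    then have "Y \<notin> S1" using in_Vw[of Y u1] in_Vw[OF Y] dj by (auto simp: S1_def)
    then show "set_mset w - S1 \<noteq> {}" using Y w by auto
    show "\<forall>X\<in>set_mset w - S1. X \<inter> Vw u1 = {}"
      using in_Vw[of _ u2] dj by (auto simp: S1_def w)
  qed
qed

lemma pds_ln_gibbs_expval_not_connected:
  assumes fin: "finite V" and dpos: "\<forall>v\<in>V. d v > 0" and finE: "finite E"
    and E: "\<forall>X\<in>E. X \<subseteq> V" and loc: "local_terms V d E h" "local_terms V d E f"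
    and wE: "set w1 \<union> set w2 \<subseteq> E" and ncw: "\<not> connected_cluster (mset w1 + mset w2)"
  shows "pds (map Inl w2 @ map Inr w1) (\<lambda>a b. ln (Re (gibbs_expval V d (ham c E h a) (ham c' E f b))))
    (\<lambda>_. 0) (\<lambda>_. 0) = 0"
proof -
  define w where "w = mset w1 + mset w2"
  let ?cs = "map Inl w2 @ map Inr w1"
  have cs_sub: "set ?cs \<subseteq> set_mset w <+> set_mset w" by (auto simp: w_def)
  have cs_hits: "\<exists>c\<in>set ?cs. c \<in> T <+> T" if "X \<in># w" "X \<in> T" for X T
    using that by (force simp: w_def)
  show ?thesis
  proof (cases "\<exists>X0\<in>#w. X0 \<noteq> {}")
    case True
    then obtain S1 S2 W X0 where S: "set_mset w = S1 \<union> S2" "S1 \<inter> S2 = {}" "X0 \<in> S1" "S2 \<noteq> {}"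
      and W: "\<forall>X\<in>S1. X \<subseteq> W" "\<forall>X\<in>S2. X \<inter> W = {}"
      using not_connected_cluster_separation[OF ncw[folded w_def]] by meson
    obtain c1 c2 where c1: "c1 \<in> set ?cs" "c1 \<in> S1 <+> S1" and c2: "c2 \<in> set ?cs" "c2 \<in> S2 <+> S2"
      using cs_hits S by (metis UnI1 UnI2 equals0I)
    show ?thesis
      by (rule pds_ln_gibbs_expval_separated[OF fin dpos finE E loc _ S(2) W _ c1 c2])
         (use wE cs_sub S(1) in \<open>auto simp: w_def\<close>)
  next
    case False
    have "size w \<ge> 2" unfolding w_def by (rule not_connected_cluster_size[OF ncw])
    then obtain X where "X \<in># w" by (metis multiset_nonemptyE not_numeral_le_zero size_empty)
    with False have "set_mset w = {{}}" by auto
    then show ?thesis using wE cs_sub \<open>size w \<ge> 2\<close>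
      by (intro pds_ln_gibbs_expval_empty_terms[OF fin dpos finE loc]) (auto simp: w_def)
  qed
qed

lemma Hop_eq_ham: "(\<lambda>s t. - of_real c * Hop V k h a s t) = ham (- c) (Ek V k) h a"
  by (simp add: ham_def Hop_def)

theorem proposition1:
  fixes n k :: nat and d :: "nat \<Rightarrow> nat" and h f :: "nat set \<Rightarrow> op"
    and \<beta> \<tau> :: real and w1 w2 :: "nat set list" and m1 m2 :: nat
  defines "V \<equiv> {1..n}"
  assumes dpos: "\<forall>v\<in>V. d v > 0"
    and k: "k \<ge> 1"
    and h: "\<forall>X\<in>Ek V k. hermitian V d (h X) \<and> supported_on V d X (h X)"
    and f: "\<forall>X\<in>Ek V k. hermitian V d (f X) \<and> supported_on V d X (f X)"
    and w1: "mset w1 \<in> clusters V k m1"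
    and w2: "mset w2 \<in> clusters V k m2"
    and nc: "mset w1 + mset w2 \<notin> conn_clusters V k (m1 + m2)"
  shows "Da w2 (Db w1 (\<lambda>a b.
           let Ea = mexp V d (\<lambda>s t. - of_real \<beta> * Hop V k h a s t);
               \<rho> = (\<lambda>s t. Ea s t / mtrace V d Ea);
               Fb = mexp V d (\<lambda>s t. - of_real \<tau> * Hop V k f b s t)
           in ln (Re (mtrace V d (mmul V d Fb \<rho>)))))
         (\<lambda>_. 0) (\<lambda>_. 0) = 0"
proof -
  have fin: "finite V" and finE: "finite (Ek V k)" and E: "\<forall>X\<in>Ek V k. X \<subseteq> V"
    by (auto simp: V_def Ek_def intro: finite_subset[of _ "Pow V"])
  have loc: "local_terms V d (Ek V k) h" "local_terms V d (Ek V k) f"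
    using h f by (simp_all add: local_terms_def)
  have wE: "set w1 \<union> set w2 \<subseteq> Ek V k" and ncw: "\<not> connected_cluster (mset w1 + mset w2)"
    using w1 w2 nc by (auto simp: clusters_def conn_clusters_def)
  show ?thesis
    unfolding Da_Db_eq_pds Let_def Hop_eq_ham mtrace_mmul_divide gibbs_expval_def[symmetric]
    by (rule pds_ln_gibbs_expval_not_connected[OF fin dpos finE E loc wE ncw])
qed

end
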